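(* Let $n\ge 4$ and $2\le t\le n-2$. If all of the following hold: (i) $\mathsf{var}(W_1(t))\,\mathsf{var}(W_2(t))\ne \mathsf{cov}(W_1(t),W_2(t))^2$; (ii) $\mathsf{var}(D_1(t))\,\mathsf{var}(D_2(t))\ne \mathsf{cov}(D_1(t),D_2(t))^2$; (iii) $\mathsf{var}(D_1(t)+D_2(t))\ne 0$; (iv) $\mathsf{var}(W_1(t)+W_2(t))\ne 0$, then the covariance matrix $\Sigma(t)=\mathsf{var}(\vec a(t))$ is invertible, so that the statistic $S(t)$ is well defined.
   Context: Let $G_1,\dots,G_n$ be a sequence of observations (networks) and let $K_1,K_2$ be two real symmetric $n\times n$ kernel matrices computed from this sequence, with $(i,j)$ entry $k_{xij}$ of $K_x$, $x\in\{1,2\}$. The permutation null distribution assigns probability $1/n!$ to each of the $n!$ permutations of the sequence, i.e. the kernel matrices $K_x$ are replaced by $(k_{x\pi(i)\pi(j)})_{i,j}$ for a uniformly random permutation $\pi$ of $\{1,\dots,n\}$ (the same $\pi$ for both kernels); $\mathsf{E},\mathsf{var},\mathsf{cov}$ denote expectation, variance and covariance under this distribution. For $x\in\{1,2\}$ define \[ \alpha_x(t)=\frac{1}{t(t-1)}\sum_{i=1}^n\sum_{j\ne i}k_{xij}\mathbb{1}\{i,j\le t\},\qquad \beta_x(t)=\frac{1}{(n-t)(n-t-1)}\sum_{i=1}^n\sum_{j\ne i}k_{xij}\mathbb{1}\{i,j> t\}, \] \[ W_x(t)=\frac{t}{n}\alpha_x(t)+\frac{n-t}{n}\beta_x(t),\qquad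 D_x(t)=\frac{t(t-1)}{n(n-1)}\alpha_x(t)-\frac{(n-t)(n-t-1)}{n(n-1)}\beta_x(t). \] Let $\vec a(t)=[\alpha_1(t),\beta_1(t),\alpha_2(t),\beta_2(t)]^{\mathsf T}$, $\Sigma(t)=\mathsf{var}(\vec a(t))$, and \[ S(t)=[\vec a(t)-\mathsf{E}\vec a(t)]^{\mathsf T}\Sigma(t)^{-1}[\vec a(t)-\mathsf{E}\vec a(t)]. \] *)

theory Defs
  imports "HOL-Analysis.Analysis" "HOL-Combinatorics.Permutations"
begin

text \<open>Observations are indexed 0..n-1 (paper: 1..n). A kernel matrix is a function
  K :: nat => nat => real, only its entries with indices < n matter.
  The permutation null distribution is the uniform distribution on the n! permutations
  of {0..<n}; a permutation p acts by replacing K i j with K (p i) (p j).\<close>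

definition perms :: "nat \<Rightarrow> (nat \<Rightarrow> nat) set" where
  "perms n = {p. p permutes {0..<n}}"

definition pE :: "nat \<Rightarrow> ((nat \<Rightarrow> nat) \<Rightarrow> real) \<Rightarrow> real" where
  "pE n f = (\<Sum>p\<in>perms n. f p) / fact n"

definition pcov :: "nat \<Rightarrow> ((nat \<Rightarrow> nat) \<Rightarrow> real) \<Rightarrow> ((nat \<Rightarrow> nat) \<Rightarrow> real) \<Rightarrow> real" where
  "pcov n f g = pE n (\<lambda>p. (f p - pE n f) * (g p - pE n g))"

definition pvar :: "nat \<Rightarrow> ((nat \<Rightarrow> nat) \<Rightarrow> real) \<Rightarrow> real" where
  "pvar n f = pcov n f f"

definition alpha :: "nat \<Rightarrow> (nat \<Rightarrow> nat \<Rightarrow> real) \<Rightarrow> nat \<Rightarrow> (nat \<Rightarrow> nat) \<Rightarrow> real" where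
  "alpha n K t p = (1 / (real t * (real t - 1))) *
     (\<Sum>i<n. \<Sum>j<n. if j \<noteq> i \<and> i < t \<and> j < t then K (p i) (p j) else 0)"

definition beta :: "nat \<Rightarrow> (nat \<Rightarrow> nat \<Rightarrow> real) \<Rightarrow> nat \<Rightarrow> (nat \<Rightarrow> nat) \<Rightarrow> real" where
  "beta n K t p = (1 / ((real n - real t) * (real n - real t - 1))) *
     (\<Sum>i<n. \<Sum>j<n. if j \<noteq> i \<and> t \<le> i \<and> t \<le> j then K (p i) (p j) else 0)"

definition Wstat :: "nat \<Rightarrow> (nat \<Rightarrow> nat \<Rightarrow> real) \<Rightarrow> nat \<Rightarrow> (nat \<Rightarrow> nat) \<Rightarrow> real" where
  "Wstat n K t p = real t / real n * alpha n K t p + (real n - real t) / real n * beta n K t p"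

definition Dstat :: "nat \<Rightarrow> (nat \<Rightarrow> nat \<Rightarrow> real) \<Rightarrow> nat \<Rightarrow> (nat \<Rightarrow> nat) \<Rightarrow> real" where
  "Dstat n K t p = real t * (real t - 1) / (real n * (real n - 1)) * alpha n K t p
     - (real n - real t) * (real n - real t - 1) / (real n * (real n - 1)) * beta n K t p"

definition avec :: "nat \<Rightarrow> (nat \<Rightarrow> nat \<Rightarrow> real) \<Rightarrow> (nat \<Rightarrow> nat \<Rightarrow> real) \<Rightarrow> nat \<Rightarrow> (nat \<Rightarrow> nat) \<Rightarrow> real^4" where
  "avec n K1 K2 t p = vector [alpha n K1 t p, beta n K1 t p, alpha n K2 t p, beta n K2 t p]"

definition Sigma_mat :: "nat \<Rightarrow> (nat \<Rightarrow> nat \<Rightarrow> real) \<Rightarrow> (nat \<Rightarrow> nat \<Rightarrow> real) \<Rightarrow> nat \<Rightarrow> real^4^4" where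
  "Sigma_mat n K1 K2 t = (\<chi> i j. pcov n (\<lambda>p. avec n K1 K2 t p $ i) (\<lambda>p. avec n K1 K2 t p $ j))"

end

(*
  The permutation covariance of a kernel entry k(pi i, pi j) with a function g(pi k) of a single
  permuted index only depends on whether k is one of i, j (value c_in) or not (value c_out), and
  summing over k gives 2 c_in + (n - 2) c_out = 0, because the sum of g(pi k) over all k does not
  depend on pi. With the weights of W_x(t) this yields cov(W_x(t), g(pi k)) = (2 c_in + (n - 2) c_out) / n = 0
  for every k. For a symmetric kernel, D_y(t) is a signed sum of row sums of K_y at single permuted
  indices, so W_x(t) and D_y(t) are uncorrelated.

  The map (alpha_x, beta_x) to (W_x, D_x) is invertible. So if Sigma(t) v = 0, the statistic v . a(t)
  is a combination of W_1, W_2, D_1, D_2 that is uncorrelated with each of them; by the decorrelation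
  the coefficients solve two 2x2 Gram systems, which are nonsingular by (i) and (ii).
*)

theory Submission
  imports Defs
begin

subsection \<open>Expectation and covariance under the permutation distribution\<close>

lemma card_perms: "card (perms n) = fact n"
  unfolding perms_def by (rule card_permutations) auto

lemma perms_lessThan: "p \<in> perms n \<Longrightarrow> i < n \<Longrightarrow> p i < n"
  unfolding perms_def using permutes_in_image[of p "{0..<n}" i] by simp

lemma pE_const: "pE n (\<lambda>p. c) = c"
  unfolding pE_def by (simp add: card_perms)

lemma pE_cong: "(\<And>p. p \<in> perms n \<Longrightarrow> f p = g p) \<Longrightarrow> pE n f = pE n g"
  unfolding pE_def by (simp cong: sum.cong)

lemma pE_add: "pE n (\<lambda>p. f p + g p) = pE n f + pE n g"
  unfolding pE_def by (simp add: sum.distrib add_divide_distrib)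

lemma pE_diff: "pE n (\<lambda>p. f p - g p) = pE n f - pE n g"
  unfolding pE_def by (simp add: sum_subtractf diff_divide_distrib)

lemma pE_cmult: "pE n (\<lambda>p. c * f p) = c * pE n f"
  unfolding pE_def by (simp add: sum_distrib_left)

lemma pE_sum: "pE n (\<lambda>p. \<Sum>i\<in>I. f i p) = (\<Sum>i\<in>I. pE n (f i))"
  unfolding pE_def by (simp add: sum.swap[of _ I] sum_divide_distrib)

lemma pE_comp_permutes:
  assumes "s permutes {0..<n}"
  shows "pE n (\<lambda>p. F (p \<circ> s)) = pE n F"
  unfolding pE_def perms_def using sum_permutations_compose_right[OF assms, of F] by simp

lemma pcov_eq: "pcov n f g = pE n (\<lambda>p. f p * g p) - pE n f * pE n g"
proof -
  have "pcov n f g = pE n (\<lambda>p. f p * g p) - pE n (\<lambda>p. pE n g * f p)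
      - pE n (\<lambda>p. pE n f * g p) + pE n (\<lambda>p. pE n f * pE n g)"
    unfolding pcov_def by (simp add: pE_add[symmetric] pE_diff[symmetric] algebra_simps)
  then show ?thesis by (simp add: pE_cmult pE_const)
qed

lemma pcov_commute: "pcov n f g = pcov n g f"
  unfolding pcov_eq by (simp add: mult.commute)

lemma pcov_cong:
  "(\<And>p. p \<in> perms n \<Longrightarrow> f p = f' p) \<Longrightarrow> (\<And>p. p \<in> perms n \<Longrightarrow> g p = g' p) \<Longrightarrow>
    pcov n f g = pcov n f' g'"
  unfolding pcov_eq by (metis (no_types, lifting) pE_cong)

lemma pcov_add_right: "pcov n f (\<lambda>p. g p + h p) = pcov n f g + pcov n f h"
  unfolding pcov_eq by (simp add: distrib_left pE_add algebra_simps)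

lemma pcov_diff_right: "pcov n f (\<lambda>p. g p - h p) = pcov n f g - pcov n f h"
  unfolding pcov_eq by (simp add: right_diff_distrib pE_diff algebra_simps)

lemma pcov_cmult_right: "pcov n f (\<lambda>p. c * g p) = c * pcov n f g"
  unfolding pcov_eq by (simp add: pE_cmult algebra_simps)

lemma pcov_sum_right: "pcov n f (\<lambda>p. \<Sum>i\<in>I. g i p) = (\<Sum>i\<in>I. pcov n f (g i))"
  unfolding pcov_eq by (simp add: sum_distrib_left pE_sum sum_subtractf)

lemma pcov_add_left: "pcov n (\<lambda>p. g p + h p) f = pcov n g f + pcov n h f"
  by (metis pcov_add_right pcov_commute)

lemma pcov_diff_left: "pcov n (\<lambda>p. g p - h p) f = pcov n g f - pcov n h f"
  by (metis pcov_diff_right pcov_commute)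

lemma pcov_cmult_left: "pcov n (\<lambda>p. c * g p) f = c * pcov n g f"
  by (metis pcov_cmult_right pcov_commute)

lemma pcov_sum_left: "pcov n (\<lambda>p. \<Sum>i\<in>I. g i p) f = (\<Sum>i\<in>I. pcov n (g i) f)"
  by (subst pcov_commute, subst pcov_sum_right) (simp add: pcov_commute)

lemma pcov_const_right:
  assumes "\<And>p. p \<in> perms n \<Longrightarrow> g p = c"
  shows "pcov n f g = 0"
proof -
  have "pcov n f g = pcov n f (\<lambda>p. c * 1)" by (rule pcov_cong) (use assms in auto)
  also have "\<dots> = 0" unfolding pcov_cmult_right by (simp add: pcov_eq pE_const)
  finally show ?thesis .
qed

lemma pcov_comp_permutes:
  assumes "s permutes {0..<n}"
  shows "pcov n (\<lambda>p. F (p \<circ> s)) (\<lambda>p. G (p \<circ> s)) = pcov n F G"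
  unfolding pcov_eq using pE_comp_permutes[OF assms] by simp

subsection \<open>Exchangeability\<close>

lemma permutes_extend_inj_on:
  assumes "finite A" "X \<subseteq> A" "inj_on f X" "f ` X \<subseteq> A"
  obtains s where "s permutes A" "\<And>x. x \<in> X \<Longrightarrow> s x = f x"
proof -
  have "finite X" using assms(1,2) by (rule finite_subset[rotated])
  then have "card (A - X) = card (A - f ` X)"
    using assms by (simp add: card_Diff_subset card_image)
  then obtain h where h: "bij_betw h (A - X) (A - f ` X)"
    using finite_same_card_bij[of "A - X" "A - f ` X"] assms(1) by auto
  define s where "s x = (if x \<in> X then f x else if x \<in> A then h x else x)" for x
  have "bij_betw s X (f ` X)"
    using assms(3) bij_betw_cong[of X s f] inj_on_imp_bij_betw[of f X] by (simp add: s_def)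
  moreover have "bij_betw s (A - X) (A - f ` X)"
    using h bij_betw_cong[of "A - X" s h] by (simp add: s_def)
  ultimately have "bij_betw s (X \<union> (A - X)) (f ` X \<union> (A - f ` X))"
    by (rule bij_betw_combine) blast
  then have "bij_betw s A A"
    using assms(2,4) by (simp add: Un_absorb1)
  then have "s permutes A"
    by (rule bij_imp_permutes) (use assms(2) in \<open>auto simp: s_def\<close>)
  then show thesis using that by (simp add: s_def)
qed

lemma pcov_entry_coord_comp_inj_on:
  assumes "X \<subseteq> {0..<n}" "inj_on f X" "f ` X \<subseteq> {0..<n}" "a \<in> X" "b \<in> X" "c \<in> X"
  shows "pcov n (\<lambda>p. K (p (f a)) (p (f b))) (\<lambda>p. g (p (f c))) = pcov n (\<lambda>p. K (p a) (p b)) (\<lambda>p. g (p c))"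
proof -
  obtain s where s: "s permutes {0..<n}" "\<And>x. x \<in> X \<Longrightarrow> s x = f x"
    using permutes_extend_inj_on[OF _ assms(1-3)] by auto
  have "pcov n (\<lambda>p. K (p a) (p b)) (\<lambda>p. g (p c))
      = pcov n (\<lambda>p. K ((p \<circ> s) a) ((p \<circ> s) b)) (\<lambda>p. g ((p \<circ> s) c))"
    by (rule pcov_comp_permutes[OF s(1), symmetric])
  also have "\<dots> = pcov n (\<lambda>p. K (p (f a)) (p (f b))) (\<lambda>p. g (p (f c)))"
    using s(2) assms(4-6) by simp
  finally show ?thesis ..
qed

lemma pcov_entry_coord_exchangeable:
  fixes K :: "nat \<Rightarrow> nat \<Rightarrow> real" and g :: "nat \<Rightarrow> real"
  assumes "3 \<le> n" and sym: "\<forall>i<n. \<forall>j<n. K i j = K j i"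
    and "i < n" "j < n" "k < n" "i \<noteq> j"
  shows "pcov n (\<lambda>p. K (p i) (p j)) (\<lambda>p. g (p k)) =
    (if k = i \<or> k = j then pcov n (\<lambda>p. K (p 0) (p 1)) (\<lambda>p. g (p 0))
     else pcov n (\<lambda>p. K (p 0) (p 1)) (\<lambda>p. g (p 2)))"
proof -
  have at_first: "pcov n (\<lambda>p. K (p a) (p b)) (\<lambda>p. g (p a)) = pcov n (\<lambda>p. K (p 0) (p 1)) (\<lambda>p. g (p 0))"
    if "a < n" "b < n" "a \<noteq> b" for a b
    using pcov_entry_coord_comp_inj_on[of "{0, 1}" n "\<lambda>x. if x = 0 then a else b" 0 1 0] that assms(1)
    by (simp add: inj_on_def)
  show ?thesis
  proof (cases "k = i \<or> k = j")
    case True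
    have "pcov n (\<lambda>p. K (p i) (p j)) (\<lambda>p. g (p j)) = pcov n (\<lambda>p. K (p j) (p i)) (\<lambda>p. g (p j))"
      by (intro pcov_cong refl) (use sym assms(3,4) perms_lessThan in blast)
    then show ?thesis
      using True at_first[of i j] at_first[of j i] assms(3-6) by auto
  next
    case False
    then show ?thesis
      using pcov_entry_coord_comp_inj_on[of "{0, 1, 2}" n "\<lambda>x. if x = 0 then i else if x = 1 then j else k" 0 1 2]
        assms by (simp add: inj_on_def)
  qed
qed

lemma pcov_sum_coords: "(\<Sum>l<n. pcov n X (\<lambda>p. g (p l))) = 0"
proof -
  have "(\<Sum>l<n. pcov n X (\<lambda>p. g (p l))) = pcov n X (\<lambda>p. \<Sum>l<n. g (p l))"
    by (rule pcov_sum_right[symmetric])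
  also have "\<dots> = 0"
  proof (rule pcov_const_right)
    fix p assume "p \<in> perms n"
    then have "p permutes {..<n}" by (simp add: perms_def atLeast0LessThan)
    then show "(\<Sum>l<n. g (p l)) = (\<Sum>l<n. g l)"
      using sum.permute[of p "{..<n}" g] by (simp add: comp_def)
  qed
  finally show ?thesis .
qed

subsection \<open>Sums over ordered pairs of distinct indices\<close>

definition pair_sum :: "'a set \<Rightarrow> ('a \<Rightarrow> 'a \<Rightarrow> 'b::comm_monoid_add) \<Rightarrow> 'b" where
  "pair_sum S f = (\<Sum>i\<in>S. \<Sum>j\<in>S - {i}. f i j)"

lemma sum_offdiag_eq_pair_sum:
  fixes n :: nat
  shows "(\<Sum>i<n. \<Sum>j<n. if j \<noteq> i \<and> P i \<and> P j then f i j else 0) = pair_sum {i. i < n \<and> P i} f"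
proof -
  let ?S = "{i. i < n \<and> P i}"
  have row: "(\<Sum>j<n. if j \<noteq> i \<and> P i \<and> P j then f i j else 0) = (if P i then \<Sum>j\<in>?S - {i}. f i j else 0)"
    for i
  proof -
    have "(\<Sum>j<n. if j \<noteq> i \<and> P i \<and> P j then f i j else 0) = (\<Sum>j\<in>{j\<in>{..<n}. j \<noteq> i \<and> P i \<and> P j}. f i j)"
      by (rule sum.inter_filter[symmetric]) simp
    also have "{j\<in>{..<n}. j \<noteq> i \<and> P i \<and> P j} = (if P i then ?S - {i} else {})"
      by auto
    finally show ?thesis by simp
  qed
  have "(\<Sum>i<n. if P i then \<Sum>j\<in>?S - {i}. f i j else 0) = (\<Sum>i\<in>{i\<in>{..<n}. P i}. \<Sum>j\<in>?S - {i}. f i j)"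
    by (rule sum.inter_filter[symmetric]) simp
  also have "{i\<in>{..<n}. P i} = ?S" by auto
  finally show ?thesis unfolding row pair_sum_def .
qed

lemma alpha_eq_pair_sum:
  assumes "t \<le> n"
  shows "alpha n K t p = pair_sum {..<t} (\<lambda>i j. K (p i) (p j)) / (real t * (real t - 1))"
proof -
  have "{i. i < n \<and> i < t} = {..<t}" using assms by auto
  then show ?thesis by (simp add: alpha_def sum_offdiag_eq_pair_sum)
qed

lemma beta_eq_pair_sum:
  "beta n K t p = pair_sum {t..<n} (\<lambda>i j. K (p i) (p j)) / ((real n - real t) * (real n - real t - 1))"
proof -
  have "{i. i < n \<and> t \<le> i} = {t..<n}" by auto
  then show ?thesis by (simp add: beta_def sum_offdiag_eq_pair_sum)
qed

lemma pair_sum_indicator: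
  fixes a b :: real
  assumes "finite S"
  shows "pair_sum S (\<lambda>i j. if k = i \<or> k = j then a else b)
    = real (card S) * (real (card S) - 1) * b + (if k \<in> S then 2 * (real (card S) - 1) * (a - b) else 0)"
proof -
  define m where "m = real (card S) - 1"
  have card: "real (card (S - {i})) = m" if "i \<in> S" for i
    using assms that card_gt_0_iff[of S] by (auto simp: m_def of_nat_diff Suc_le_eq)
  have row: "(\<Sum>j\<in>S - {i}. if k = i \<or> k = j then a else b)
      = m * b + (if k = i then m * (a - b) else if k \<in> S then a - b else 0)"
    if "i \<in> S" for i
  proof -
    have "(\<Sum>j\<in>S - {i}. if k = i \<or> k = j then a else b)
        = (\<Sum>j\<in>S - {i}. b + (if k = i \<or> k = j then a - b else 0))"
      by (rule sum.cong) auto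
    also have "\<dots> = m * b + (\<Sum>j\<in>S - {i}. if k = i \<or> k = j then a - b else 0)"
      by (simp only: sum.distrib sum_constant card[OF that])
    also have "(\<Sum>j\<in>S - {i}. if k = i \<or> k = j then a - b else 0)
        = (if k = i then m * (a - b) else if k \<in> S then a - b else 0)"
    proof (cases "k = i")
      case True
      then show ?thesis using card[OF that] by simp
    next
      case False
      then show ?thesis using assms by (simp add: sum.delta')
    qed
    finally show ?thesis .
  qed
  have "pair_sum S (\<lambda>i j. if k = i \<or> k = j then a else b)
      = real (card S) * m * b + (\<Sum>i\<in>S. if k = i then m * (a - b) else if k \<in> S then a - b else 0)"
    unfolding pair_sum_def by (simp add: row sum.distrib)
  also have "(\<Sum>i\<in>S. if k = i then m * (a - b) else if k \<in> S then a - b else 0)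
      = (if k \<in> S then 2 * m * (a - b) else 0)"
  proof (cases "k \<in> S")
    case True
    then have "(\<Sum>i\<in>S. if k = i then m * (a - b) else if k \<in> S then a - b else 0)
        = m * (a - b) + (\<Sum>i\<in>S - {k}. if k = i then m * (a - b) else a - b)"
      using assms by (simp add: sum.remove[of S k])
    also have "(\<Sum>i\<in>S - {k}. if k = i then m * (a - b) else a - b) = (\<Sum>i\<in>S - {k}. a - b)"
      by (rule sum.cong) auto
    also have "\<dots> = m * (a - b)"
      using card[OF True] by simp
    finally show ?thesis using True by simp
  qed (auto intro: sum.neutral)
  finally show ?thesis by (simp add: m_def)
qed

lemma pair_sum_diff_eq_row_sums:
  fixes f :: "'a \<Rightarrow> 'a \<Rightarrow> 'b::ab_group_add"
  assumes "finite A" "finite B" "A \<inter> B = {}"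
    and sym: "\<And>i j. i \<in> A \<union> B \<Longrightarrow> j \<in> A \<union> B \<Longrightarrow> f i j = f j i"
  shows "pair_sum A f - pair_sum B f
    = (\<Sum>i\<in>A. \<Sum>j\<in>(A \<union> B) - {i}. f i j) - (\<Sum>i\<in>B. \<Sum>j\<in>(A \<union> B) - {i}. f i j)"
proof -
  have split: "(\<Sum>j\<in>(A \<union> B) - {i}. f i j) = (\<Sum>j\<in>C - {i}. f i j) + (\<Sum>j\<in>D. f i j)"
    if "A \<union> B = C \<union> D" "C \<inter> D = {}" "finite C" "finite D" "i \<in> C" for C D i
  proof -
    have "(A \<union> B) - {i} = (C - {i}) \<union> D" using that by auto
    then show ?thesis using that by (simp add: sum.union_disjoint Diff_Int_distrib2)
  qed
  have cross: "(\<Sum>i\<in>B. \<Sum>j\<in>A. f i j) = (\<Sum>i\<in>A. \<Sum>j\<in>B. f i j)"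
    by (subst sum.swap) (auto intro!: sum.cong simp: sym)
  have "(\<Sum>i\<in>A. \<Sum>j\<in>(A \<union> B) - {i}. f i j) = pair_sum A f + (\<Sum>i\<in>A. \<Sum>j\<in>B. f i j)"
    using split[of A B] assms(1-3) by (simp add: pair_sum_def sum.distrib)
  moreover have "(\<Sum>i\<in>B. \<Sum>j\<in>(A \<union> B) - {i}. f i j) = pair_sum B f + (\<Sum>i\<in>B. \<Sum>j\<in>A. f i j)"
    using split[of B A] assms(1-3) by (simp add: pair_sum_def sum.distrib Un_commute Int_commute)
  ultimately show ?thesis using cross by simp
qed

subsection \<open>Decorrelation of the weighted and the difference statistics\<close>

lemma pcov_pair_sum_coord:
  fixes K :: "nat \<Rightarrow> nat \<Rightarrow> real" and g :: "nat \<Rightarrow> real"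
  assumes "3 \<le> n" and sym: "\<forall>i<n. \<forall>j<n. K i j = K j i" and "S \<subseteq> {..<n}" "k < n"
  defines "c_in \<equiv> pcov n (\<lambda>p. K (p 0) (p 1)) (\<lambda>p. g (p 0))"
    and "c_out \<equiv> pcov n (\<lambda>p. K (p 0) (p 1)) (\<lambda>p. g (p 2))"
  shows "pcov n (\<lambda>p. pair_sum S (\<lambda>i j. K (p i) (p j))) (\<lambda>p. g (p k))
    = real (card S) * (real (card S) - 1) * c_out + (if k \<in> S then 2 * (real (card S) - 1) * (c_in - c_out) else 0)"
proof -
  have "pcov n (\<lambda>p. pair_sum S (\<lambda>i j. K (p i) (p j))) (\<lambda>p. g (p k))
      = pair_sum S (\<lambda>i j. pcov n (\<lambda>p. K (p i) (p j)) (\<lambda>p. g (p k)))"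
    unfolding pair_sum_def by (simp add: pcov_sum_left)
  also have "\<dots> = pair_sum S (\<lambda>i j. if k = i \<or> k = j then c_in else c_out)"
    unfolding pair_sum_def
  proof (intro sum.cong refl)
    fix i j assume "i \<in> S" "j \<in> S - {i}"
    moreover have "i < n" "j < n" using calculation assms(3) by auto
    ultimately show "pcov n (\<lambda>p. K (p i) (p j)) (\<lambda>p. g (p k)) = (if k = i \<or> k = j then c_in else c_out)"
      using pcov_entry_coord_exchangeable[of n K i j k g] assms(1,2,4) unfolding c_in_def c_out_def by auto
  qed
  also have "\<dots> = real (card S) * (real (card S) - 1) * c_out + (if k \<in> S then 2 * (real (card S) - 1) * (c_in - c_out) else 0)"
    using assms(3) by (intro pair_sum_indicator) (auto intro: finite_subset)
  finally show ?thesis .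
qed

lemma pcov_entry_coord_balance:
  fixes K :: "nat \<Rightarrow> nat \<Rightarrow> real" and g :: "nat \<Rightarrow> real"
  assumes "3 \<le> n" and sym: "\<forall>i<n. \<forall>j<n. K i j = K j i"
  shows "2 * pcov n (\<lambda>p. K (p 0) (p 1)) (\<lambda>p. g (p 0)) + (real n - 2) * pcov n (\<lambda>p. K (p 0) (p 1)) (\<lambda>p. g (p 2)) = 0"
proof -
  define c_in where "c_in = pcov n (\<lambda>p. K (p 0) (p 1)) (\<lambda>p. g (p 0))"
  define c_out where "c_out = pcov n (\<lambda>p. K (p 0) (p 1)) (\<lambda>p. g (p 2))"
  have "0 = (\<Sum>l<n. pcov n (\<lambda>p. K (p 0) (p 1)) (\<lambda>p. g (p l)))"
    by (rule pcov_sum_coords[symmetric])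
  also have "\<dots> = (\<Sum>l<n. if l = 0 \<or> l = 1 then c_in else c_out)"
  proof (intro sum.cong refl)
    fix l assume "l \<in> {..<n}"
    then show "pcov n (\<lambda>p. K (p 0) (p 1)) (\<lambda>p. g (p l)) = (if l = 0 \<or> l = 1 then c_in else c_out)"
      using pcov_entry_coord_exchangeable[of n K 0 1 l g] assms unfolding c_in_def c_out_def by auto
  qed
  also have "\<dots> = 2 * c_in + (real n - 2) * c_out"
  proof -
    have "{..<n} \<inter> {l. l = 0 \<or> l = 1} = {0, 1}" "{..<n} \<inter> - {l. l = 0 \<or> l = 1} = {2..<n}"
      using assms(1) by auto
    then show ?thesis using assms(1) by (simp add: sum.If_cases of_nat_diff)
  qed
  finally show ?thesis unfolding c_in_def c_out_def ..
qed

lemma Wstat_eq_pair_sums: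
  assumes "2 \<le> t" "t + 2 \<le> n"
  shows "Wstat n K t p = 1 / (real n * (real t - 1)) * pair_sum {..<t} (\<lambda>i j. K (p i) (p j))
      + 1 / (real n * (real n - real t - 1)) * pair_sum {t..<n} (\<lambda>i j. K (p i) (p j))"
proof -
  have cancel: "a / real n * (x / (a * b)) = 1 / (real n * b) * x" if "a \<noteq> 0" for a b x :: real
    using that by simp
  show ?thesis
    using assms by (simp add: Wstat_def alpha_eq_pair_sum beta_eq_pair_sum cancel)
qed

lemma Dstat_eq_pair_sums:
  assumes "2 \<le> t" "t + 2 \<le> n"
  shows "Dstat n K t p = 1 / (real n * (real n - 1))
      * (pair_sum {..<t} (\<lambda>i j. K (p i) (p j)) - pair_sum {t..<n} (\<lambda>i j. K (p i) (p j)))"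
proof -
  have cancel: "a / c * (x / a) = 1 / c * x" if "a \<noteq> 0" for a c x :: real
    using that by simp
  have "t \<le> n" "real t * (real t - 1) \<noteq> 0" "(real n - real t) * (real n - real t - 1) \<noteq> 0"
    using assms by auto
  then show ?thesis
    by (simp add: Dstat_def alpha_eq_pair_sum beta_eq_pair_sum cancel diff_divide_distrib)
qed

lemma pcov_Wstat_coord_eq_0:
  fixes K :: "nat \<Rightarrow> nat \<Rightarrow> real" and g :: "nat \<Rightarrow> real"
  assumes "2 \<le> t" "t + 2 \<le> n" and sym: "\<forall>i<n. \<forall>j<n. K i j = K j i" and "k < n"
  shows "pcov n (Wstat n K t) (\<lambda>p. g (p k)) = 0"
proof -
  define c_in where "c_in = pcov n (\<lambda>p. K (p 0) (p 1)) (\<lambda>p. g (p 0))"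
  define c_out where "c_out = pcov n (\<lambda>p. K (p 0) (p 1)) (\<lambda>p. g (p 2))"
  have "3 \<le> n" using assms by simp
  note block = pcov_pair_sum_coord[OF this sym, of _ k g, folded c_in_def c_out_def]
  have "real n \<noteq> 0" "real t - 1 \<noteq> 0" "real n - real t - 1 \<noteq> 0"
    using assms(1,2) by auto
  have "pcov n (Wstat n K t) (\<lambda>p. g (p k))
      = 1 / (real n * (real t - 1)) * pcov n (\<lambda>p. pair_sum {..<t} (\<lambda>i j. K (p i) (p j))) (\<lambda>p. g (p k))
      + 1 / (real n * (real n - real t - 1)) * pcov n (\<lambda>p. pair_sum {t..<n} (\<lambda>i j. K (p i) (p j))) (\<lambda>p. g (p k))"
    unfolding Wstat_eq_pair_sums[OF assms(1,2)] by (simp only: pcov_add_left pcov_cmult_left)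
  also have "\<dots> = 1 / (real n * (real t - 1)) * ((real t - 1) * (real t * c_out + (if k < t then 2 * (c_in - c_out) else 0)))
      + 1 / (real n * (real n - real t - 1))
        * ((real n - real t - 1) * ((real n - real t) * c_out + (if k < t then 0 else 2 * (c_in - c_out))))"
  proof -
    have "{..<t} \<subseteq> {..<n}" "{t..<n} \<subseteq> {..<n}" using assms(2) by auto
    then show ?thesis
      using assms(1,2,4) by (cases "k < t") (simp_all add: block of_nat_diff algebra_simps)
  qed
  also have "\<dots> = (real t * c_out + (if k < t then 2 * (c_in - c_out) else 0)) / real n
      + ((real n - real t) * c_out + (if k < t then 0 else 2 * (c_in - c_out))) / real n"
    using \<open>real t - 1 \<noteq> 0\<close> \<open>real n - real t - 1 \<noteq> 0\<close> by simp
  also have "\<dots> = (2 * c_in + (real n - 2) * c_out) / real n"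
    by (cases "k < t") (simp_all add: add_divide_distrib[symmetric] algebra_simps)
  finally show ?thesis
    using pcov_entry_coord_balance[OF \<open>3 \<le> n\<close> sym, of g] by (simp add: c_in_def c_out_def)
qed

lemma Dstat_eq_row_sums:
  fixes K :: "nat \<Rightarrow> nat \<Rightarrow> real"
  assumes "2 \<le> t" "t + 2 \<le> n" and sym: "\<forall>i<n. \<forall>j<n. K i j = K j i" and "p \<in> perms n"
  shows "Dstat n K t p = 1 / (real n * (real n - 1))
    * ((\<Sum>i<t. \<Sum>b\<in>{..<n} - {p i}. K (p i) b) - (\<Sum>i\<in>{t..<n}. \<Sum>b\<in>{..<n} - {p i}. K (p i) b))"
proof -
  have p: "p permutes {..<n}" using assms(4) by (simp add: perms_def atLeast0LessThan)
  have row: "(\<Sum>j\<in>{..<n} - {i}. K (p i) (p j)) = (\<Sum>b\<in>{..<n} - {p i}. K (p i) b)" if "i < n" for i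
  proof -
    have "p ` ({..<n} - {i}) = {..<n} - {p i}"
      using p that by (simp add: image_set_diff permutes_inj permutes_image)
    moreover have "inj_on p ({..<n} - {i})"
      using p by (meson inj_on_subset permutes_inj subset_UNIV)
    ultimately show ?thesis by (metis (no_types, lifting) sum.reindex_cong)
  qed
  have "{..<t} \<union> {t..<n} = {..<n}" "{..<t} \<inter> {t..<n} = {}" using assms(2) by auto
  moreover have "K (p i) (p j) = K (p j) (p i)" if "i < n" "j < n" for i j
    using sym perms_lessThan[OF assms(4)] that by blast
  ultimately have "pair_sum {..<t} (\<lambda>i j. K (p i) (p j)) - pair_sum {t..<n} (\<lambda>i j. K (p i) (p j))
      = (\<Sum>i<t. \<Sum>j\<in>{..<n} - {i}. K (p i) (p j)) - (\<Sum>i\<in>{t..<n}. \<Sum>j\<in>{..<n} - {i}. K (p i) (p j))"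
    using pair_sum_diff_eq_row_sums[of "{..<t}" "{t..<n}" "\<lambda>i j. K (p i) (p j)"] by auto
  also have "\<dots> = (\<Sum>i<t. \<Sum>b\<in>{..<n} - {p i}. K (p i) b) - (\<Sum>i\<in>{t..<n}. \<Sum>b\<in>{..<n} - {p i}. K (p i) b)"
    using assms(2) by (simp add: row)
  finally show ?thesis by (simp add: Dstat_eq_pair_sums[OF assms(1,2)])
qed

lemma pcov_Wstat_Dstat_eq_0:
  fixes K1 K2 :: "nat \<Rightarrow> nat \<Rightarrow> real"
  assumes "2 \<le> t" "t + 2 \<le> n"
    and sym1: "\<forall>i<n. \<forall>j<n. K1 i j = K1 j i" and sym2: "\<forall>i<n. \<forall>j<n. K2 i j = K2 j i"
  shows "pcov n (Wstat n K1 t) (Dstat n K2 t) = 0"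
proof -
  define r where "r a = (\<Sum>b\<in>{..<n} - {a}. K2 a b)" for a
  have "pcov n (Wstat n K1 t) (Dstat n K2 t)
      = pcov n (Wstat n K1 t) (\<lambda>p. 1 / (real n * (real n - 1)) * ((\<Sum>i<t. r (p i)) - (\<Sum>i\<in>{t..<n}. r (p i))))"
    by (rule pcov_cong) (simp_all add: Dstat_eq_row_sums[OF assms(1,2) sym2] r_def)
  also have "\<dots> = 1 / (real n * (real n - 1))
      * ((\<Sum>i<t. pcov n (Wstat n K1 t) (\<lambda>p. r (p i))) - (\<Sum>i\<in>{t..<n}. pcov n (Wstat n K1 t) (\<lambda>p. r (p i))))"
    by (simp only: pcov_cmult_right pcov_diff_right pcov_sum_right)
  also have "\<dots> = 0"
    using assms(2) by (simp add: pcov_Wstat_coord_eq_0[OF assms(1,2) sym1])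
  finally show ?thesis .
qed

subsection \<open>Invertibility of the covariance matrix\<close>

lemma pcov_Wstat_Dstat_eq_0_of_alpha_beta:
  assumes "pcov n (alpha n K t) L = 0" "pcov n (beta n K t) L = 0"
  shows "pcov n (Wstat n K t) L = 0" "pcov n (Dstat n K t) L = 0"
proof -
  have W: "Wstat n K t = (\<lambda>p. real t / real n * alpha n K t p + (real n - real t) / real n * beta n K t p)"
    by (simp add: fun_eq_iff Wstat_def)
  show "pcov n (Wstat n K t) L = 0"
    unfolding W pcov_add_left pcov_cmult_left using assms by simp
  have D: "Dstat n K t = (\<lambda>p. real t * (real t - 1) / (real n * (real n - 1)) * alpha n K t p
      - (real n - real t) * (real n - real t - 1) / (real n * (real n - 1)) * beta n K t p)"
    by (simp add: fun_eq_iff Dstat_def)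
  show "pcov n (Dstat n K t) L = 0"
    unfolding D pcov_diff_left pcov_cmult_left using assms by simp
qed

lemma pcov_lincomb_coeffs_eq_0:
  assumes L: "\<And>p. L p = c1 * X1 p + c2 * X2 p + R p"
    and "pcov n X1 L = 0" "pcov n X2 L = 0" "pcov n X1 R = 0" "pcov n X2 R = 0"
    and nondegenerate: "pvar n X1 * pvar n X2 \<noteq> (pcov n X1 X2)\<^sup>2"
  shows "c1 = 0 \<and> c2 = 0"
proof -
  have "L = (\<lambda>p. c1 * X1 p + c2 * X2 p + R p)" using L by blast
  then have "c1 * pvar n X1 + c2 * pcov n X1 X2 = 0" "c1 * pcov n X1 X2 + c2 * pvar n X2 = 0"
    using assms(2-5) by (simp_all add: pvar_def pcov_add_right pcov_cmult_right pcov_commute[of n X2 X1])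
  then have "c1 * (pvar n X1 * pvar n X2 - (pcov n X1 X2)\<^sup>2) = 0"
    "c2 * (pvar n X1 * pvar n X2 - (pcov n X1 X2)\<^sup>2) = 0"
    by algebra+
  then show ?thesis using nondegenerate by simp
qed

lemma lincomb_change_basis:
  fixes A B C E v1 v2 :: real
  assumes "A * E + B * C \<noteq> 0"
  obtains c d where "\<And>x y. v1 * x + v2 * y = c * (A * x + B * y) + d * (C * x - E * y)"
proof
  fix x y
  let ?c = "(v1 * E + v2 * C) / (A * E + B * C)" and ?d = "(v1 * B - v2 * A) / (A * E + B * C)"
  have "?c * (A * x + B * y) + ?d * (C * x - E * y)
      = ((v1 * E + v2 * C) * (A * x + B * y) + (v1 * B - v2 * A) * (C * x - E * y)) / (A * E + B * C)"
    by (metis add_divide_distrib times_divide_eq_left)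
  also have "\<dots> = v1 * x + v2 * y"
    using assms by (simp add: field_simps)
  finally show "v1 * x + v2 * y = ?c * (A * x + B * y) + ?d * (C * x - E * y)" ..
qed

lemma vector_4_nth [simp]:
  "(vector [x, y, z, w] :: 'a::zero^4) $ 1 = x"
  "(vector [x, y, z, w] :: 'a::zero^4) $ 2 = y"
  "(vector [x, y, z, w] :: 'a::zero^4) $ 3 = z"
  "(vector [x, y, z, w] :: 'a::zero^4) $ 4 = w"
  unfolding vector_def by simp_all

lemma avec_inner_eq_Wstat_Dstat:
  assumes "2 \<le> t" "t + 2 \<le> n"
  obtains c1 c2 d1 d2 where
    "\<And>p. avec n K1 K2 t p \<bullet> v
      = c1 * Wstat n K1 t p + c2 * Wstat n K2 t p + (d1 * Dstat n K1 t p + d2 * Dstat n K2 t p)"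
    and "c1 = 0 \<Longrightarrow> c2 = 0 \<Longrightarrow> d1 = 0 \<Longrightarrow> d2 = 0 \<Longrightarrow> v = 0"
proof -
  define A where "A = real t / real n"
  define B where "B = (real n - real t) / real n"
  define C where "C = real t * (real t - 1) / (real n * (real n - 1))"
  define E where "E = (real n - real t) * (real n - real t - 1) / (real n * (real n - 1))"
  have "A * E + B * C > 0"
    using assms unfolding A_def B_def C_def E_def by (intro add_pos_pos mult_pos_pos) auto
  then obtain c1 d1 c2 d2 where
    basis1: "\<And>x y. v $ 1 * x + v $ 2 * y = c1 * (A * x + B * y) + d1 * (C * x - E * y)" and
    basis2: "\<And>x y. v $ 3 * x + v $ 4 * y = c2 * (A * x + B * y) + d2 * (C * x - E * y)"
    using lincomb_change_basis by (metis less_irrefl)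
  show thesis
  proof
    fix p
    have "avec n K1 K2 t p \<bullet> v
        = (v $ 1 * alpha n K1 t p + v $ 2 * beta n K1 t p) + (v $ 3 * alpha n K2 t p + v $ 4 * beta n K2 t p)"
      by (simp add: avec_def inner_vec_def sum_4 algebra_simps)
    then show "avec n K1 K2 t p \<bullet> v
        = c1 * Wstat n K1 t p + c2 * Wstat n K2 t p + (d1 * Dstat n K1 t p + d2 * Dstat n K2 t p)"
      unfolding basis1 basis2 by (simp add: Wstat_def Dstat_def A_def B_def C_def E_def algebra_simps)
  next
    assume "c1 = 0" "c2 = 0" "d1 = 0" "d2 = 0"
    then show "v = 0"
      using basis1[of 1 0] basis1[of 0 1] basis2[of 1 0] basis2[of 0 1]
      by (simp add: vec_eq_iff forall_4)
  qed
qed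

lemma pcov_matrix_mult_vec:
  fixes X :: "(nat \<Rightarrow> nat) \<Rightarrow> real^'m"
  shows "((\<chi> i j. pcov n (\<lambda>p. X p $ i) (\<lambda>p. X p $ j)) *v v) $ i = pcov n (\<lambda>p. X p $ i) (\<lambda>p. X p \<bullet> v)"
  unfolding matrix_vector_mult_def inner_vec_def
  by (simp add: pcov_sum_right pcov_cmult_right mult.commute)

lemma pcov_Wstat_Dstat_inner_avec_eq_0:
  assumes "Sigma_mat n K1 K2 t *v v = 0"
  defines "L \<equiv> \<lambda>p. avec n K1 K2 t p \<bullet> v"
  shows "pcov n (Wstat n K1 t) L = 0" "pcov n (Wstat n K2 t) L = 0"
    and "pcov n (Dstat n K1 t) L = 0" "pcov n (Dstat n K2 t) L = 0"
proof -
  have "pcov n (\<lambda>p. avec n K1 K2 t p $ i) L = 0" for i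
    using assms pcov_matrix_mult_vec[of n "avec n K1 K2 t" v i] by (simp add: Sigma_mat_def)
  from this[of 1] this[of 2] this[of 3] this[of 4]
  show "pcov n (Wstat n K1 t) L = 0" "pcov n (Wstat n K2 t) L = 0"
    and "pcov n (Dstat n K1 t) L = 0" "pcov n (Dstat n K2 t) L = 0"
    by (simp_all add: avec_def pcov_Wstat_Dstat_eq_0_of_alpha_beta)
qed

theorem theorem2:
  fixes K1 K2 :: "nat \<Rightarrow> nat \<Rightarrow> real" and n t :: nat
  assumes "4 \<le> n" and "2 \<le> t" and "t \<le> n - 2"
    and "\<forall>i<n. \<forall>j<n. K1 i j = K1 j i"
    and "\<forall>i<n. \<forall>j<n. K2 i j = K2 j i"
    and "pvar n (Wstat n K1 t) * pvar n (Wstat n K2 t) \<noteq> (pcov n (Wstat n K1 t) (Wstat n K2 t))\<^sup>2"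
    and "pvar n (Dstat n K1 t) * pvar n (Dstat n K2 t) \<noteq> (pcov n (Dstat n K1 t) (Dstat n K2 t))\<^sup>2"
    and "pvar n (\<lambda>p. Dstat n K1 t p + Dstat n K2 t p) \<noteq> 0"
    and "pvar n (\<lambda>p. Wstat n K1 t p + Wstat n K2 t p) \<noteq> 0"
  shows "invertible (Sigma_mat n K1 K2 t)"
proof -
  have t: "2 \<le> t" "t + 2 \<le> n" using assms(1-3) by auto
  have uncorrelated: "pcov n (Wstat n Ka t) (Dstat n Kb t) = 0 \<and> pcov n (Dstat n Kb t) (Wstat n Ka t) = 0"
    if "Ka \<in> {K1, K2}" "Kb \<in> {K1, K2}" for Ka Kb
    using that assms(4,5) pcov_Wstat_Dstat_eq_0[OF t] pcov_commute[of n "Dstat n Kb t"] by auto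
  have "v = 0" if Sv: "Sigma_mat n K1 K2 t *v v = 0" for v
  proof -
    obtain c1 c2 d1 d2 where
      L: "\<And>p. avec n K1 K2 t p \<bullet> v
        = c1 * Wstat n K1 t p + c2 * Wstat n K2 t p + (d1 * Dstat n K1 t p + d2 * Dstat n K2 t p)"
      and coeffs: "c1 = 0 \<Longrightarrow> c2 = 0 \<Longrightarrow> d1 = 0 \<Longrightarrow> d2 = 0 \<Longrightarrow> v = 0"
      using avec_inner_eq_Wstat_Dstat[OF t] by metis
    note orthogonal = pcov_Wstat_Dstat_inner_avec_eq_0[OF Sv]
    have "c1 = 0 \<and> c2 = 0"
      by (rule pcov_lincomb_coeffs_eq_0[OF L orthogonal(1,2) _ _ assms(6)])
        (simp_all add: pcov_add_right pcov_cmult_right uncorrelated)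
    moreover have "avec n K1 K2 t p \<bullet> v
        = d1 * Dstat n K1 t p + d2 * Dstat n K2 t p + (c1 * Wstat n K1 t p + c2 * Wstat n K2 t p)" for p
      using L by simp
    then have "d1 = 0 \<and> d2 = 0"
      by (rule pcov_lincomb_coeffs_eq_0[OF _ orthogonal(3,4) _ _ assms(7)])
        (simp_all add: pcov_add_right pcov_cmult_right uncorrelated)
    ultimately show "v = 0" using coeffs by blast
  qed
  then show ?thesis
    unfolding invertible_left_inverse matrix_left_invertible_ker by blast
qed

end
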